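(* For $k\ge1$ and real $x$ let $F_k(x)=\sum_{\nu=1}^k \frac{\sin(\nu x)}{\nu}$, and for $x\in(0,\pi)$ let $H(x)=\sum_{k=1}^\infty F_k(x)(\cos(x))^k$. Then for every $x\in(0,\pi)$, $$H(x)=\frac{\pi/2-x}{1-\cos(x)}.$$ In particular, $H$ is completely monotonic on $(0,\pi/2]$.
   Context: A function $f:I\to\mathbb{R}$ on an interval $I\subset\mathbb{R}$ is completely monotonic if it has derivatives of all orders and $(-1)^n f^{(n)}(x)\ge 0$ for all $n=0,1,2,\dots$ and $x\in I$. *)

theory Defs
  imports "HOL-Analysis.Analysis"
begin

definition completely_monotonic_on :: "real set \<Rightarrow> (real \<Rightarrow> real) \<Rightarrow> bool" where
  "completely_monotonic_on I f \<longleftrightarrow>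
     (\<exists>D :: nat \<Rightarrow> real \<Rightarrow> real.
        (\<forall>x\<in>I. D 0 x = f x) \<and>
        (\<forall>n. \<forall>x\<in>I. (D n has_real_derivative D (Suc n) x) (at x within I)) \<and>
        (\<forall>n. \<forall>x\<in>I. (-1) ^ n * D n x \<ge> 0))"

definition F :: "nat \<Rightarrow> real \<Rightarrow> real" where
  "F k x = (\<Sum>\<nu>=1..k. sin (real \<nu> * x) / real \<nu>)"

definition H :: "real \<Rightarrow> real" where
  "H x = (\<Sum>k. F (Suc k) x * (cos x) ^ (Suc k))"

end

theory Submission
  imports Defs
begin

text \<open>For \<open>0 < x < \<pi>\<close> and \<open>c = cos x\<close>, the series \<open>\<Sum> c^n sin(n x)/n\<close> is
  \<open>- Im (Ln (1 - c exp(i x)))\<close>, and \<open>1 - c exp(i x) = sin x exp(i (x - \<pi>/2))\<close>, so it sums to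
  \<open>\<pi>/2 - x\<close>. The \<open>F k x\<close> are its partial sums, so the Cauchy product with the geometric series
  gives \<open>H x = (\<pi>/2 - x) / (1 - c)\<close>. In the variable \<open>t = \<pi>/2 - x\<close> this is
  \<open>t / (1 - sin t) = t (sec t ^ 2 + sec t tan t)\<close>, a polynomial in \<open>t\<close>, \<open>tan t\<close>, \<open>sec t\<close> with
  nonnegative coefficients. Since \<open>tan' = 1 + tan ^ 2\<close> and \<open>sec' = sec tan\<close>, every
  \<open>t\<close>-derivative is again such a polynomial, hence nonnegative for \<open>0 \<le> t < \<pi>/2\<close>; the
  reflection \<open>x = \<pi>/2 - t\<close> turns this into the alternating signs of complete monotonicity.\<close>

lemma sums_partial_sums_times_power:
  fixes b :: "nat \<Rightarrow> 'a::{real_normed_field,banach}"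
  assumes c: "norm c < 1" and b: "\<And>n. norm (b n) \<le> M" and s: "(\<lambda>n. b n * c ^ n) sums s"
  shows "(\<lambda>k. (\<Sum>n\<le>k. b n) * c ^ k) sums (s / (1 - c))"
proof -
  have geom: "summable (\<lambda>n. norm (c ^ n))"
    using c by (simp add: norm_power summable_geometric)
  have "summable (\<lambda>n. norm (b n * c ^ n))"
  proof (rule summable_comparison_test')
    show "summable (\<lambda>n. M * norm (c ^ n))" using geom by (rule summable_mult)
    show "norm (norm (b n * c ^ n)) \<le> M * norm (c ^ n)" for n
      using b[of n] by (simp add: norm_mult mult_right_mono)
  qed
  then have "(\<lambda>k. \<Sum>i\<le>k. b i * c ^ i * c ^ (k - i)) sums ((\<Sum>n. b n * c ^ n) * (\<Sum>n. c ^ n))"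
    using geom by (rule Cauchy_product_sums)
  moreover have "(\<Sum>i\<le>k. b i * c ^ i * c ^ (k - i)) = (\<Sum>n\<le>k. b n) * c ^ k" for k
    by (simp add: sum_distrib_right mult.assoc flip: power_add)
  moreover have "(\<Sum>n. b n * c ^ n) * (\<Sum>n. c ^ n) = s / (1 - c)"
    by (simp add: sums_unique[OF s, symmetric] sums_unique[OF geometric_sums[OF c], symmetric])
  ultimately show ?thesis by simp
qed

lemma sums_power_sin_Im_Ln:
  assumes "\<bar>r\<bar> < 1"
  shows "(\<lambda>n. r ^ n * sin (real n * \<theta>) / real n) sums (- Im (Ln (1 - complex_of_real r * cis \<theta>)))"
proof -
  define w where "w = complex_of_real r * cis \<theta>"
  have "(\<lambda>n. - ((-(-w)) ^ n) / of_nat n) sums Ln (1 + (-w))"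
    using assms by (intro Ln_series') (simp add: w_def norm_mult)
  then have "(\<lambda>n. w ^ n / of_nat n) sums (- Ln (1 - w))"
    using sums_minus by fastforce
  then have Im_sums: "(\<lambda>n. Im (w ^ n / of_nat n)) sums Im (- Ln (1 - w))"
    by (rule sums_Im)
  have Im_term: "Im (w ^ n / of_nat n) = r ^ n * sin (real n * \<theta>) / real n" for n
  proof -
    have "w ^ n = complex_of_real (r ^ n) * cis (real n * \<theta>)"
      by (simp add: w_def power_mult_distrib Complex.DeMoivre)
    then show ?thesis by (simp add: Im_divide_of_nat)
  qed
  show ?thesis
    using Im_sums unfolding Im_term by (simp add: w_def)
qed

lemma abs_cos_less_one:
  assumes "0 < x" "x < pi"
  shows "\<bar>cos x\<bar> < 1"
  using cos_monotone_0_pi[of 0 x] cos_monotone_0_pi[of x pi] assms by auto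

lemma Ln_one_minus_cos_cis:
  assumes "0 < x" "x < pi"
  shows "Ln (1 - complex_of_real (cos x) * cis x) = complex_of_real (ln (sin x)) + \<i> * complex_of_real (x - pi / 2)"
proof -
  have sin_pos: "sin x > 0" using assms by (simp add: sin_gt_zero)
  have "1 - complex_of_real (cos x) * cis x = complex_of_real (sin x) * cis (x - pi / 2)"
    by (simp add: complex_eq_iff cos_diff sin_diff sin_squared_eq power2_eq_square algebra_simps)
  also have "\<dots> = exp (complex_of_real (ln (sin x)) + \<i> * complex_of_real (x - pi / 2))"
    using sin_pos by (simp add: exp_add cis_conv_exp exp_of_real)
  finally show ?thesis
    using assms by (simp add: Ln_exp)
qed

lemma sums_cos_power_sin:
  assumes "0 < x" "x < pi"
  shows "(\<lambda>n. cos x ^ n * sin (real n * x) / real n) sums (pi / 2 - x)"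
  using sums_power_sin_Im_Ln[OF abs_cos_less_one[OF assms], of x]
  by (simp add: Ln_one_minus_cos_cis[OF assms])

lemma F_eq_sum_atMost: "F k x = (\<Sum>n\<le>k. sin (real n * x) / real n)"
proof -
  have "{..k} = insert 0 {1..k}" by auto
  then show ?thesis by (simp add: F_def)
qed

lemma sums_F_times_cos_power:
  assumes "0 < x" "x < pi"
  shows "(\<lambda>k. F (Suc k) x * cos x ^ Suc k) sums ((pi / 2 - x) / (1 - cos x))"
proof -
  have "norm (sin (real n * x) / real n) \<le> 1" for n
    by (cases n) (auto simp: abs_sin_le_one divide_le_eq intro: order_trans[OF abs_sin_le_one])
  moreover have "(\<lambda>n. sin (real n * x) / real n * cos x ^ n) sums (pi / 2 - x)"
    using sums_cos_power_sin[OF assms] by (simp add: mult.commute)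
  ultimately have "(\<lambda>k. F k x * cos x ^ k) sums ((pi / 2 - x) / (1 - cos x))"
    unfolding F_eq_sum_atMost
    using abs_cos_less_one[OF assms] by (intro sums_partial_sums_times_power) auto
  moreover have "F 0 x = 0" by (simp add: F_def)
  ultimately show ?thesis
    using sums_Suc_iff[of "\<lambda>k. F k x * cos x ^ k"] by simp
qed

lemma H_eq:
  assumes "0 < x" "x < pi"
  shows "H x = (pi / 2 - x) / (1 - cos x)"
  unfolding H_def using sums_F_times_cos_power[OF assms] by (rule sums_unique[symmetric])

datatype tan_sec_poly =
  TS_Const real | TS_Var | TS_Tan | TS_Sec
| TS_Add tan_sec_poly tan_sec_poly | TS_Mult tan_sec_poly tan_sec_poly

fun eval_tsp :: "tan_sec_poly \<Rightarrow> real \<Rightarrow> real" where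
  "eval_tsp (TS_Const a) t = a"
| "eval_tsp TS_Var t = t"
| "eval_tsp TS_Tan t = tan t"
| "eval_tsp TS_Sec t = inverse (cos t)"
| "eval_tsp (TS_Add p q) t = eval_tsp p t + eval_tsp q t"
| "eval_tsp (TS_Mult p q) t = eval_tsp p t * eval_tsp q t"

fun deriv_tsp :: "tan_sec_poly \<Rightarrow> tan_sec_poly" where
  "deriv_tsp (TS_Const a) = TS_Const 0"
| "deriv_tsp TS_Var = TS_Const 1"
| "deriv_tsp TS_Tan = TS_Add (TS_Const 1) (TS_Mult TS_Tan TS_Tan)"
| "deriv_tsp TS_Sec = TS_Mult TS_Sec TS_Tan"
| "deriv_tsp (TS_Add p q) = TS_Add (deriv_tsp p) (deriv_tsp q)"
| "deriv_tsp (TS_Mult p q) = TS_Add (TS_Mult (deriv_tsp p) q) (TS_Mult p (deriv_tsp q))"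

fun nonneg_tsp :: "tan_sec_poly \<Rightarrow> bool" where
  "nonneg_tsp (TS_Const a) \<longleftrightarrow> a \<ge> 0"
| "nonneg_tsp (TS_Add p q) \<longleftrightarrow> nonneg_tsp p \<and> nonneg_tsp q"
| "nonneg_tsp (TS_Mult p q) \<longleftrightarrow> nonneg_tsp p \<and> nonneg_tsp q"
| "nonneg_tsp _ \<longleftrightarrow> True"

lemma nonneg_tsp_deriv_tsp: "nonneg_tsp p \<Longrightarrow> nonneg_tsp (deriv_tsp p)"
  by (induction p) auto

lemma nonneg_tsp_funpow_deriv_tsp: "nonneg_tsp p \<Longrightarrow> nonneg_tsp ((deriv_tsp ^^ n) p)"
  by (induction n) (auto simp: nonneg_tsp_deriv_tsp)

lemma eval_tsp_nonneg:
  assumes "nonneg_tsp p" "0 \<le> t" "t < pi / 2"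
  shows "0 \<le> eval_tsp p t"
  using assms
proof (induction p)
  case TS_Tan
  then show ?case by (cases "t = 0") (auto intro: less_imp_le[OF tan_gt_zero])
next
  case TS_Sec
  then show ?case by (simp add: cos_gt_zero_pi less_imp_le)
qed auto

lemma has_real_derivative_eval_tsp:
  assumes "cos t \<noteq> 0"
  shows "(eval_tsp p has_real_derivative eval_tsp (deriv_tsp p) t) (at t)"
proof (induction p)
  case TS_Tan
  have "inverse ((cos t)\<^sup>2) = 1 + tan t * tan t"
    using assms by (simp add: tan_def field_simps power2_eq_square)
  then show ?case
    using DERIV_tan[OF assms] by (simp add: fun_eq_iff)
next
  case TS_Sec
  have "((\<lambda>t. inverse (cos t)) has_real_derivative - (inverse (cos t) * (- sin t) * inverse (cos t))) (at t)"
    using assms by (intro DERIV_inverse' DERIV_cos)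
  moreover have "- (inverse (cos t) * (- sin t) * inverse (cos t)) = inverse (cos t) * tan t"
    using assms by (simp add: tan_def field_simps power2_eq_square)
  ultimately have "((\<lambda>t. inverse (cos t)) has_real_derivative inverse (cos t) * tan t) (at t)"
    by metis
  then show ?case by simp
qed (auto intro!: derivative_eq_intros simp: fun_eq_iff)

lemma completely_monotonic_on_cong:
  assumes "\<And>x. x \<in> I \<Longrightarrow> f x = g x" "completely_monotonic_on I f"
  shows "completely_monotonic_on I g"
  using assms unfolding completely_monotonic_on_def by metis

lemma completely_monotonic_on_eval_tsp_reflect:
  assumes p: "nonneg_tsp p" and I: "I \<subseteq> {0<..pi / 2}"
  shows "completely_monotonic_on I (\<lambda>x. eval_tsp p (pi / 2 - x))"
  unfolding completely_monotonic_on_def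
proof (intro exI[of _ "\<lambda>n x. (-1) ^ n * eval_tsp ((deriv_tsp ^^ n) p) (pi / 2 - x)"] conjI ballI allI)
  fix n x assume "x \<in> I"
  then have x: "0 < x" "x \<le> pi / 2" using I by auto
  show "0 \<le> (-1) ^ n * ((-1) ^ n * eval_tsp ((deriv_tsp ^^ n) p) (pi / 2 - x))"
    using x pi_gt_zero
    by (simp add: eval_tsp_nonneg nonneg_tsp_funpow_deriv_tsp p flip: power_mult_distrib)
  have "cos (pi / 2 - x) \<noteq> 0"
    using x sin_gt_zero[of x] by (simp add: cos_diff)
  then have "(eval_tsp ((deriv_tsp ^^ n) p) has_real_derivative
      eval_tsp ((deriv_tsp ^^ Suc n) p) (pi / 2 - x)) (at (pi / 2 - x))"
    by (simp add: has_real_derivative_eval_tsp)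
  then have "((\<lambda>x. eval_tsp ((deriv_tsp ^^ n) p) (pi / 2 - x)) has_real_derivative
      eval_tsp ((deriv_tsp ^^ Suc n) p) (pi / 2 - x) * (-1)) (at x)"
    by (rule DERIV_chain2[where g="\<lambda>x. pi / 2 - x"]) (auto intro!: derivative_eq_intros)
  then have "((\<lambda>x. (-1) ^ n * eval_tsp ((deriv_tsp ^^ n) p) (pi / 2 - x)) has_real_derivative
      (-1) ^ Suc n * eval_tsp ((deriv_tsp ^^ Suc n) p) (pi / 2 - x)) (at x)"
    by (auto dest: DERIV_cmult[where c="(-1) ^ n"] simp: algebra_simps)
  then show "((\<lambda>x. (-1) ^ n * eval_tsp ((deriv_tsp ^^ n) p) (pi / 2 - x)) has_real_derivative
      (-1) ^ Suc n * eval_tsp ((deriv_tsp ^^ Suc n) p) (pi / 2 - x)) (at x within I)"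
    by (rule has_field_derivative_at_within)
qed simp

definition H_tsp :: tan_sec_poly where
  "H_tsp = TS_Mult TS_Var (TS_Add (TS_Mult TS_Sec TS_Sec) (TS_Mult TS_Sec TS_Tan))"

lemma eval_H_tsp:
  assumes "cos t \<noteq> 0"
  shows "eval_tsp H_tsp t = t / (1 - sin t)"
proof -
  have "(1 - sin t) * (1 + sin t) = (cos t)\<^sup>2"
    by (simp add: cos_squared_eq algebra_simps power2_eq_square)
  then have "1 - sin t \<noteq> 0" "1 + sin t \<noteq> 0"
    using assms by auto
  with \<open>(1 - sin t) * (1 + sin t) = (cos t)\<^sup>2\<close> assms show ?thesis
    by (simp add: H_tsp_def tan_def field_simps power2_eq_square)
      (simp add: sin_cos_squared_add3 flip: distrib_left)
qed

theorem corollary2: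
  shows "(\<forall>x\<in>{0<..<pi}. summable (\<lambda>k. F (Suc k) x * (cos x) ^ (Suc k)) \<and>
            H x = (pi / 2 - x) / (1 - cos x))
         \<and> completely_monotonic_on {0<..pi / 2} H"
proof (intro conjI ballI)
  fix x :: real assume "x \<in> {0<..<pi}"
  then have x: "0 < x" "x < pi" by auto
  show "summable (\<lambda>k. F (Suc k) x * (cos x) ^ (Suc k))"
    using sums_F_times_cos_power[OF x] by (rule sums_summable)
  show "H x = (pi / 2 - x) / (1 - cos x)"
    using x by (rule H_eq)
next
  have "eval_tsp H_tsp (pi / 2 - x) = H x" if "x \<in> {0<..pi / 2}" for x
  proof -
    have x: "0 < x" "x < pi" using that pi_gt_zero by auto
    then have "cos (pi / 2 - x) \<noteq> 0" using sin_gt_zero[of x] by (simp add: cos_diff)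
    then show ?thesis
      using x by (simp add: eval_H_tsp H_eq sin_diff)
  qed
  moreover have "completely_monotonic_on {0<..pi / 2} (\<lambda>x. eval_tsp H_tsp (pi / 2 - x))"
    by (rule completely_monotonic_on_eval_tsp_reflect) (auto simp: H_tsp_def)
  ultimately show "completely_monotonic_on {0<..pi / 2} H"
    by (rule completely_monotonic_on_cong)
qed

end
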